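(* Let $\mathtt Q$ be a probability measure and $(M_t)_{t\in\mathbb N_0}$ a nonnegative $\mathtt Q$-martingale with $M_0>0$. Let $F$ be the distribution function under $\mathtt Q$ of $\inf_{t\in\mathbb N_0}1/M_t$. If $F$ is atomless (continuous), then $\mathfrak p_t:=F(\inf_{s\le t}1/M_s)$, $t\in\mathbb N_0$, is a $\mathtt Q$-admissible anytime-valid $p$-value for $\{\mathtt Q\}$.
   Context: Setup: observations $(X_t)_{t\in\mathbb N}$, an independent $[0,1]$-uniform $U$, filtration $\mathcal F_0=\sigma(U)$, $\mathcal F_t=\sigma(U,X_1,\dots,X_t)$, $\mathcal F_\infty=\sigma(\bigcup_t\mathcal F_t)$; stopping times may be infinite. An anytime-valid $p$-value for $\{\mathtt Q\}$ is an adapted $[0,1]$-valued $(\mathfrak p_t)_{t\in\mathbb N_0}$ with $\mathtt Q(\mathfrak p_\tau\le\alpha)\le\alpha$ for all stopping times $\tau$ and $\alpha\in[0,1]$, where $\mathfrak p_\infty:=\liminf_t\mathfrak p_t$. It is $\mathtt Q$-admissible if there is no other such $p$-value $(\mathfrak p'_t)$ with $\mathtt Q(\mathfrak p'_t\le\mathfrak p_t)=1$ for all $t$ and $\mathtt Q(\mathfrak p'_t<\mathfrak p_t)>0$ for some $t$. *)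

theory Defs
  imports "HOL-Probability.Probability" "HOL-Library.Extended_Nat"
begin

definition filt :: "'a measure \<Rightarrow> ('a \<Rightarrow> real) \<Rightarrow> (nat \<Rightarrow> 'a \<Rightarrow> 'b) \<Rightarrow> 'b measure \<Rightarrow> nat \<Rightarrow> 'a measure" where
  "filt Q U X S t = sigma (space Q)
     ({U -` B \<inter> space Q | B. B \<in> sets borel} \<union>
      {X i -` B \<inter> space Q | i B. 1 \<le> i \<and> i \<le> t \<and> B \<in> sets S})"

definition obs_sigma :: "'a measure \<Rightarrow> (nat \<Rightarrow> 'a \<Rightarrow> 'b) \<Rightarrow> 'b measure \<Rightarrow> 'a measure" where
  "obs_sigma Q X S = sigma (space Q) {X i -` B \<inter> space Q | i B. 1 \<le> i \<and> B \<in> sets S}"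

definition martingale :: "'a measure \<Rightarrow> (nat \<Rightarrow> 'a measure) \<Rightarrow> (nat \<Rightarrow> 'a \<Rightarrow> real) \<Rightarrow> bool" where
  "martingale Q F M \<longleftrightarrow>
     (\<forall>t. M t \<in> borel_measurable (F t) \<and> integrable Q (M t)) \<and>
     (\<forall>s t. s \<le> t \<longrightarrow> (AE \<omega> in Q. real_cond_exp Q (F s) (M t) \<omega> = M s \<omega>))"

definition stopping_time_inf :: "(nat \<Rightarrow> 'a measure) \<Rightarrow> 'a set \<Rightarrow> ('a \<Rightarrow> enat) \<Rightarrow> bool" where
  "stopping_time_inf F \<Omega> \<tau> \<longleftrightarrow> (\<forall>t::nat. {\<omega> \<in> \<Omega>. \<tau> \<omega> = enat t} \<in> sets (F t))"

definition stopped :: "(nat \<Rightarrow> 'a \<Rightarrow> real) \<Rightarrow> ('a \<Rightarrow> enat) \<Rightarrow> 'a \<Rightarrow> real" where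
  "stopped p \<tau> \<omega> = (case \<tau> \<omega> of enat t \<Rightarrow> p t \<omega>
                       | \<infinity> \<Rightarrow> real_of_ereal (liminf (\<lambda>t. ereal (p t \<omega>))))"

definition anytime_valid :: "'a measure \<Rightarrow> (nat \<Rightarrow> 'a measure) \<Rightarrow> (nat \<Rightarrow> 'a \<Rightarrow> real) \<Rightarrow> bool" where
  "anytime_valid Q F p \<longleftrightarrow>
     (\<forall>t. p t \<in> borel_measurable (F t) \<and> (\<forall>\<omega>\<in>space Q. 0 \<le> p t \<omega> \<and> p t \<omega> \<le> 1)) \<and>
     (\<forall>\<tau> (\<alpha>::real). stopping_time_inf F (space Q) \<tau> \<longrightarrow> 0 \<le> \<alpha> \<longrightarrow> \<alpha> \<le> 1 \<longrightarrow>
        measure Q {\<omega> \<in> space Q. stopped p \<tau> \<omega> \<le> \<alpha>} \<le> \<alpha>)"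

definition admissible :: "'a measure \<Rightarrow> (nat \<Rightarrow> 'a measure) \<Rightarrow> (nat \<Rightarrow> 'a \<Rightarrow> real) \<Rightarrow> bool" where
  "admissible Q F p \<longleftrightarrow> anytime_valid Q F p \<and>
     \<not> (\<exists>p'. anytime_valid Q F p' \<and>
          (\<forall>t. measure Q {\<omega> \<in> space Q. p' t \<omega> \<le> p t \<omega>} = 1) \<and>
          (\<exists>t. measure Q {\<omega> \<in> space Q. p' t \<omega> < p t \<omega>} > 0))"

end

theory Submission
  imports Defs
begin

text \<open>Let \<open>Y = inf t. 1 / M t\<close>, let \<open>Y_upto t = min s \<le> t. 1 / M s\<close>, and let \<open>G\<close> be the
  distribution function of \<open>Y\<close>, so that \<open>p t = G (Y_upto t)\<close> decreases to \<open>G Y\<close>. As \<open>G\<close> is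
  continuous, \<open>G Y\<close> is uniform on [0,1], and every stopped value of \<open>p\<close> dominates it: \<open>p\<close> is valid.

  For admissibility let \<open>p'\<close> be valid with \<open>p' \<le> p\<close> a.s. and suppose the event
  \<open>A = {p' t \<le> \<alpha> < p t}\<close> has positive probability. Stopping \<open>p'\<close> at \<open>t\<close> on \<open>A\<close> and never
  elsewhere, validity at level \<open>\<alpha>\<close> and \<open>Q {G Y \<le> \<alpha>} = \<alpha>\<close> force \<open>A\<close> to lie almost surely in
  \<open>{G Y \<le> \<alpha>} = {Y \<le> c}\<close>, \<open>c\<close> the \<open>\<alpha>\<close>-quantile. But \<open>Y_upto t > c\<close> on \<open>A\<close>, so \<open>M t < 1 / c\<close>
  there, and Doob's maximal inequality shows that with positive probability on \<open>A\<close> the martingale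
  never afterwards comes close to \<open>1 / c\<close>, i.e. \<open>Y > c\<close>.\<close>

lemma sets_filt:
  "sets (filt Q U X S t) = sigma_sets (space Q) ({U -` B \<inter> space Q | B. B \<in> sets borel} \<union>
     {X i -` B \<inter> space Q | i B. 1 \<le> i \<and> i \<le> t \<and> B \<in> sets S})"
  unfolding filt_def by (rule sets_measure_of) blast

lemma space_filt: "space (filt Q U X S t) = space Q"
  unfolding filt_def by (rule space_measure_of) blast

lemma sets_filt_subset:
  assumes "U \<in> borel_measurable Q" and "\<And>i. X i \<in> measurable Q S"
  shows "sets (filt Q U X S t) \<subseteq> sets Q"
  unfolding sets_filt using assms by (intro sets.sigma_sets_subset) (auto intro: measurable_sets)

lemma sets_filt_mono:
  assumes "s \<le> t"
  shows "sets (filt Q U X S s) \<subseteq> sets (filt Q U X S t)"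
  unfolding sets_filt using assms by (intro sigma_sets_mono' Un_mono subset_refl) (blast intro: le_trans)

lemma downward_closed_borel:
  fixes D :: "'b::{complete_linorder, linorder_topology} set"
  assumes down: "\<And>x y. y \<in> D \<Longrightarrow> x \<le> y \<Longrightarrow> x \<in> D"
  shows "D \<in> sets borel"
proof (cases "Sup D \<in> D")
  case True
  have "D = {..Sup D}"
    using down[OF True] by (auto intro: Sup_upper)
  then show ?thesis by (metis borel_closed closed_atMost)
next
  case False
  have "D = {..<Sup D}"
  proof
    show "D \<subseteq> {..<Sup D}" using False by (auto simp: order_less_le intro: Sup_upper)
    show "{..<Sup D} \<subseteq> D" using down by (auto simp: less_Sup_iff intro: less_imp_le)
  qed
  then show ?thesis by (metis borel_open open_lessThan)
qed

lemma borel_measurable_mono_complete: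
  fixes g :: "'b::{complete_linorder, linorder_topology} \<Rightarrow> real"
  assumes "mono g"
  shows "g \<in> borel_measurable borel"
proof (rule borel_measurableI_le)
  fix a
  have "{y. g y \<le> a} \<in> sets borel"
  proof (rule downward_closed_borel)
    fix x y assume "y \<in> {y. g y \<le> a}" "x \<le> y"
    with monoD[OF assms \<open>x \<le> y\<close>] show "x \<in> {y. g y \<le> a}" by simp
  qed
  then show "{y \<in> space borel. g y \<le> a} \<in> sets borel" by simp
qed

lemma borel_measurable_ennreal_reciprocal [measurable]:
  "f \<in> borel_measurable N \<Longrightarrow> (\<lambda>\<omega>. 1 / ennreal (f \<omega>)) \<in> borel_measurable N"
  unfolding divide_ennreal_def by simp

lemma ennreal_less_reciprocal_iff:
  assumes "0 < r"
  shows "ennreal r < 1 / ennreal x \<longleftrightarrow> x < 1 / r"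
proof (cases "x \<le> 0")
  case True
  then have "1 / ennreal x = top" by (simp add: ennreal_eq_0_iff divide_ennreal_def ennreal_inverse_zero)
  moreover have "x < 1 / r" using True assms by (meson divide_pos_pos le_less_trans zero_less_one)
  ultimately show ?thesis by simp
next
  case False
  then have "1 / ennreal x = ennreal (1 / x)" using divide_ennreal[of 1 x] by simp
  with False assms show ?thesis by (simp add: ennreal_less_iff field_simps)
qed

lemma incseq_tendsto_from_below:
  fixes x :: "'b::{dense_linorder, linorder_topology, first_countable_topology}"
  assumes "a < x"
  obtains u where "incseq u" "\<And>n. u n < x" "u \<longlonglongrightarrow> x"
proof -
  obtain v where v: "\<And>n. v n < x" "v \<longlonglongrightarrow> x"
    using approx_from_below_dense_linorder[OF assms] by blast
  define u where "u n = Max (v ` {..n})" for n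
  have "incseq u" unfolding incseq_def u_def by (auto intro!: Max_mono)
  moreover have u_less: "u n < x" for n unfolding u_def using v(1) by (subst Max_less_iff) auto
  moreover have "u \<longlonglongrightarrow> x"
  proof (rule tendsto_sandwich)
    show "\<forall>\<^sub>F n in sequentially. v n \<le> u n" unfolding u_def by (auto intro: Max_ge)
    show "\<forall>\<^sub>F n in sequentially. u n \<le> x" by (intro always_eventually allI less_imp_le u_less)
  qed (use v(2) in auto)
  ultimately show ?thesis by (rule that)
qed

lemma decseq_tendsto_from_above:
  fixes x :: "'b::{dense_linorder, linorder_topology, first_countable_topology}"
  assumes "x < a"
  obtains u where "decseq u" "\<And>n. x < u n" "u \<longlonglongrightarrow> x"
proof -
  obtain v where v: "\<And>n. x < v n" "v \<longlonglongrightarrow> x"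
    using approx_from_above_dense_linorder[OF assms] by blast
  define u where "u n = Min (v ` {..n})" for n
  have "decseq u" unfolding decseq_def u_def by (auto intro!: Min_antimono)
  moreover have u_greater: "x < u n" for n unfolding u_def using v(1) by (subst Min_gr_iff) auto
  moreover have "u \<longlonglongrightarrow> x"
  proof (rule tendsto_sandwich)
    show "\<forall>\<^sub>F n in sequentially. x \<le> u n" by (intro always_eventually allI less_imp_le u_greater)
    show "\<forall>\<^sub>F n in sequentially. u n \<le> v n" unfolding u_def by (auto intro: Min_le)
  qed (use v(2) in auto)
  ultimately show ?thesis by (rule that)
qed

lemma (in finite_measure) measure_less_pos_imp_ex_threshold:
  fixes f g :: "'a \<Rightarrow> real"
  assumes [measurable]: "f \<in> borel_measurable M" "g \<in> borel_measurable M"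
    and pos: "0 < measure M {x \<in> space M. f x < g x}"
  shows "\<exists>r. 0 < measure M {x \<in> space M. f x \<le> r \<and> r < g x}"
proof (rule ccontr)
  define A where "A r = {x \<in> space M. f x \<le> real_of_rat r \<and> real_of_rat r < g x}" for r
  assume none: "\<nexists>r. 0 < measure M {x \<in> space M. f x \<le> r \<and> r < g x}"
  have "measure M (A r) = 0" for r
  proof -
    have "\<not> 0 < measure M (A r)" using none unfolding A_def by blast
    then show ?thesis using measure_nonneg[of M "A r"] by linarith
  qed
  moreover have "A r \<in> sets M" for r
    unfolding A_def by measurable
  ultimately have "A r \<in> null_sets M" for r
    by (simp add: emeasure_eq_measure null_setsI)
  then have "(\<Union>r. A r) \<in> null_sets M" by blast
  moreover have "{x \<in> space M. f x < g x} \<subseteq> (\<Union>r. A r)"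
  proof
    fix x assume x: "x \<in> {x \<in> space M. f x < g x}"
    then obtain r where "f x < real_of_rat r" "real_of_rat r < g x"
      using of_rat_dense by blast
    with x have "x \<in> A r" unfolding A_def by simp
    then show "x \<in> (\<Union>r. A r)" by blast
  qed
  moreover have "{x \<in> space M. f x < g x} \<in> sets M" by measurable
  ultimately have "{x \<in> space M. f x < g x} \<in> null_sets M"
    by (metis null_sets_subset)
  with pos show False by (simp add: measure_eq_0_null_sets)
qed

lemma stopping_time_inf_on_event:
  assumes "A \<in> sets (F t)" and "A \<subseteq> \<Omega>"
  shows "stopping_time_inf F \<Omega> (\<lambda>\<omega>. if \<omega> \<in> A then enat t else \<infinity>)"
  unfolding stopping_time_inf_def
proof
  fix s
  have "{\<omega> \<in> \<Omega>. (if \<omega> \<in> A then enat t else \<infinity>) = enat s} = (if s = t then A else {})"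
    using assms(2) by auto
  then show "{\<omega> \<in> \<Omega>. (if \<omega> \<in> A then enat t else \<infinity>) = enat s} \<in> sets (F s)"
    using assms(1) by simp
qed

section \<open>Distribution function of an atomless random variable\<close>

locale atomless_ennreal = prob_space +
  fixes Y :: "'a \<Rightarrow> ennreal"
  assumes measurable_Y [measurable]: "Y \<in> borel_measurable M"
    and no_atom: "\<And>y. prob {\<omega> \<in> space M. Y \<omega> = y} = 0"
begin

definition distribution_fn :: "ennreal \<Rightarrow> real" where
  "distribution_fn y = prob {\<omega> \<in> space M. Y \<omega> \<le> y}"

lemma distribution_fn_nonneg: "0 \<le> distribution_fn y"
  unfolding distribution_fn_def by simp

lemma distribution_fn_le_1: "distribution_fn y \<le> 1"
  unfolding distribution_fn_def by simp

lemma distribution_fn_mono: "mono distribution_fn"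
  unfolding distribution_fn_def by (intro monoI finite_measure_mono) (auto intro: order_trans)

lemma borel_measurable_distribution_fn [measurable]: "distribution_fn \<in> borel_measurable borel"
  using distribution_fn_mono by (rule borel_measurable_mono_complete)

lemma distribution_fn_top: "distribution_fn top = 1"
  unfolding distribution_fn_def by (simp add: prob_space)

lemma distribution_fn_0: "distribution_fn 0 = 0"
  using no_atom[of 0] unfolding distribution_fn_def by simp

lemma distribution_fn_decseq_tendsto:
  assumes "decseq y"
  shows "(\<lambda>n. distribution_fn (y n)) \<longlonglongrightarrow> distribution_fn (INF n. y n)"
proof -
  have "(\<lambda>n. prob {\<omega> \<in> space M. Y \<omega> \<le> y n}) \<longlonglongrightarrow> prob (\<Inter>n. {\<omega> \<in> space M. Y \<omega> \<le> y n})"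
    using assms by (intro finite_Lim_measure_decseq) (auto simp: decseq_def intro: order_trans)
  moreover have "(\<Inter>n. {\<omega> \<in> space M. Y \<omega> \<le> y n}) = {\<omega> \<in> space M. Y \<omega> \<le> (INF n. y n)}"
    by (auto simp: le_INF_iff)
  ultimately show ?thesis unfolding distribution_fn_def by simp
qed

text \<open>Left continuity is where the absence of atoms enters.\<close>

lemma distribution_fn_tendsto_from_below:
  assumes "incseq y" "\<And>n. y n < c" "y \<longlonglongrightarrow> c"
  shows "(\<lambda>n. distribution_fn (y n)) \<longlonglongrightarrow> distribution_fn c"
proof -
  have "(\<lambda>n. prob {\<omega> \<in> space M. Y \<omega> \<le> y n}) \<longlonglongrightarrow> prob (\<Union>n. {\<omega> \<in> space M. Y \<omega> \<le> y n})"
    using assms(1) by (intro finite_Lim_measure_incseq) (auto simp: incseq_def intro: order_trans)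
  moreover have "(\<Union>n. {\<omega> \<in> space M. Y \<omega> \<le> y n}) = {\<omega> \<in> space M. Y \<omega> < c}"
  proof (intro set_eqI iffI)
    fix \<omega> assume "\<omega> \<in> {\<omega> \<in> space M. Y \<omega> < c}"
    then have "\<forall>\<^sub>F n in sequentially. Y \<omega> < y n"
      using order_tendstoD(1)[OF assms(3)] by simp
    then obtain n where "Y \<omega> < y n" by (auto simp: eventually_sequentially)
    with \<open>\<omega> \<in> _\<close> have "\<omega> \<in> {\<omega> \<in> space M. Y \<omega> \<le> y n}" by simp
    then show "\<omega> \<in> (\<Union>n. {\<omega> \<in> space M. Y \<omega> \<le> y n})" by blast
  qed (auto intro: le_less_trans assms(2))
  moreover have "prob {\<omega> \<in> space M. Y \<omega> < c} = distribution_fn c"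
  proof -
    have "distribution_fn c = prob ({\<omega> \<in> space M. Y \<omega> < c} \<union> {\<omega> \<in> space M. Y \<omega> = c})"
      unfolding distribution_fn_def by (rule arg_cong[where f = prob]) auto
    also have "\<dots> = prob {\<omega> \<in> space M. Y \<omega> < c} + prob {\<omega> \<in> space M. Y \<omega> = c}"
      by (rule finite_measure_Union) auto
    finally show ?thesis using no_atom by simp
  qed
  ultimately show ?thesis unfolding distribution_fn_def by simp
qed

definition quantile :: "real \<Rightarrow> ennreal" where
  "quantile \<alpha> = Sup {y. distribution_fn y \<le> \<alpha>}"

lemma le_quantile: "distribution_fn y \<le> \<alpha> \<Longrightarrow> y \<le> quantile \<alpha>"
  unfolding quantile_def by (rule Sup_upper) simp

lemma distribution_fn_less_quantile:
  assumes "y < quantile \<alpha>"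
  shows "distribution_fn y \<le> \<alpha>"
proof -
  obtain z where "distribution_fn z \<le> \<alpha>" "y < z"
    using assms unfolding quantile_def less_Sup_iff by blast
  with distribution_fn_mono show ?thesis by (meson less_imp_le monoD order_trans)
qed

lemma distribution_fn_quantile_le:
  assumes "0 \<le> \<alpha>"
  shows "distribution_fn (quantile \<alpha>) \<le> \<alpha>"
proof (cases "quantile \<alpha> = 0")
  case True
  with assms show ?thesis by (simp add: distribution_fn_0)
next
  case False
  then obtain y where "incseq y" "\<And>n. y n < quantile \<alpha>" "y \<longlonglongrightarrow> quantile \<alpha>"
    using incseq_tendsto_from_below[of 0 "quantile \<alpha>"] by (auto simp: zero_less_iff_neq_zero)
  then show ?thesis
    by (intro LIMSEQ_le_const2[OF distribution_fn_tendsto_from_below]) (auto intro: distribution_fn_less_quantile)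
qed

lemma distribution_fn_quantile_ge:
  assumes "\<alpha> \<le> 1"
  shows "\<alpha> \<le> distribution_fn (quantile \<alpha>)"
proof (cases "quantile \<alpha> = top")
  case True
  with assms show ?thesis by (simp add: distribution_fn_top)
next
  case False
  then obtain y where y: "decseq y" "\<And>n. quantile \<alpha> < y n" "y \<longlonglongrightarrow> quantile \<alpha>"
    using decseq_tendsto_from_above[of "quantile \<alpha>" top] by (auto simp: top.not_eq_extremum)
  then have "(INF n. y n) = quantile \<alpha>"
    using LIMSEQ_unique LIMSEQ_INF by blast
  moreover have "\<alpha> < distribution_fn (y n)" for n
    using le_quantile y(2)[of n] by (meson not_le)
  ultimately show ?thesis
    using distribution_fn_decseq_tendsto[OF y(1)] by (intro LIMSEQ_le_const) (auto intro: less_imp_le)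
qed

lemma distribution_fn_quantile:
  "0 \<le> \<alpha> \<Longrightarrow> \<alpha> \<le> 1 \<Longrightarrow> distribution_fn (quantile \<alpha>) = \<alpha>"
  by (intro antisym distribution_fn_quantile_le distribution_fn_quantile_ge)

lemma distribution_fn_le_iff:
  assumes "0 \<le> \<alpha>"
  shows "distribution_fn y \<le> \<alpha> \<longleftrightarrow> y \<le> quantile \<alpha>"
  using le_quantile distribution_fn_quantile_le[OF assms] distribution_fn_mono
  by (meson monoD order_trans)

lemma prob_distribution_fn_le:
  assumes "0 \<le> \<alpha>" "\<alpha> \<le> 1"
  shows "prob {\<omega> \<in> space M. distribution_fn (Y \<omega>) \<le> \<alpha>} = \<alpha>"
proof -
  have "{\<omega> \<in> space M. distribution_fn (Y \<omega>) \<le> \<alpha>} = {\<omega> \<in> space M. Y \<omega> \<le> quantile \<alpha>}"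
    using distribution_fn_le_iff[OF assms(1)] by blast
  then show ?thesis
    using distribution_fn_quantile[OF assms] unfolding distribution_fn_def by simp
qed

end

section \<open>Doob's maximal inequality\<close>

locale nonneg_martingale = prob_space Q for Q :: "'a measure" +
  fixes F :: "nat \<Rightarrow> 'a measure" and M :: "nat \<Rightarrow> 'a \<Rightarrow> real"
  assumes space_F: "\<And>t. space (F t) = space Q"
    and sets_F_subset: "\<And>t. sets (F t) \<subseteq> sets Q"
    and sets_F_mono: "\<And>s t. s \<le> t \<Longrightarrow> sets (F s) \<subseteq> sets (F t)"
    and martingale: "martingale Q F M"
    and nonneg: "\<And>t. AE \<omega> in Q. 0 \<le> M t \<omega>"
begin

lemma sets_F_into_Q: "A \<in> sets (F t) \<Longrightarrow> A \<in> sets Q"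
  using sets_F_subset by blast

lemma subalgebra_F: "subalgebra Q (F t)"
  unfolding subalgebra_def using space_F sets_F_subset by auto

lemma sigma_finite_subalgebra_F: "sigma_finite_subalgebra Q (F t)"
proof -
  interpret finite_measure_subalgebra Q "F t"
    by unfold_locales (rule subalgebra_F)
  show ?thesis ..
qed

lemma measurable_F_mono: "s \<le> t \<Longrightarrow> f \<in> borel_measurable (F s) \<Longrightarrow> f \<in> borel_measurable (F t)"
  using measurable_mono[of borel borel "F s" "F t"] by (auto simp: space_F sets_F_mono)

lemma measurable_F_Q: "f \<in> borel_measurable (F t) \<Longrightarrow> f \<in> borel_measurable Q"
  by (rule measurable_from_subalg[OF subalgebra_F])

lemma measurable_M_F: "s \<le> t \<Longrightarrow> M s \<in> borel_measurable (F t)"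
  using martingale measurable_F_mono unfolding martingale_def by blast

lemma integrable_M: "integrable Q (M t)"
  using martingale unfolding martingale_def by blast

lemma measurable_M [measurable]: "M t \<in> borel_measurable Q"
  using measurable_F_Q measurable_M_F by blast

lemma set_integrable_M: "A \<in> sets Q \<Longrightarrow> set_integrable Q A (M t)"
  unfolding set_integrable_def by (intro integrable_mult_indicator integrable_M)

lemma set_integral_M_nonneg: "0 \<le> (\<integral>\<omega>\<in>A. M t \<omega> \<partial>Q)"
  unfolding set_lebesgue_integral_def
  by (rule integral_nonneg_AE) (use nonneg[of t] in \<open>auto elim!: eventually_mono\<close>)

lemma set_integral_M_eq:
  assumes A: "A \<in> sets (F s)" and "s \<le> r"
  shows "(\<integral>\<omega>\<in>A. M r \<omega> \<partial>Q) = (\<integral>\<omega>\<in>A. M s \<omega> \<partial>Q)"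
proof -
  interpret sigma_finite_subalgebra Q "F s" by (rule sigma_finite_subalgebra_F)
  have "AE \<omega> in Q. real_cond_exp Q (F s) (M r) \<omega> = M s \<omega>"
    using martingale \<open>s \<le> r\<close> unfolding martingale_def by blast
  then have "(\<integral>\<omega>\<in>A. real_cond_exp Q (F s) (M r) \<omega> \<partial>Q) = (\<integral>\<omega>\<in>A. M s \<omega> \<partial>Q)"
    using sets_F_into_Q[OF A] by (intro set_lebesgue_integral_cong_AE) auto
  with real_cond_exp_intA[OF integrable_M A] show ?thesis by simp
qed

lemma set_integral_M_split:
  assumes "B \<in> sets Q" "C \<in> sets Q"
  shows "(\<integral>\<omega>\<in>B. M t \<omega> \<partial>Q) = (\<integral>\<omega>\<in>B \<inter> C. M t \<omega> \<partial>Q) + (\<integral>\<omega>\<in>B - C. M t \<omega> \<partial>Q)"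
proof -
  have "B = (B \<inter> C) \<union> (B - C)" and "(B \<inter> C) \<inter> (B - C) = {}" by blast+
  with set_integral_Un[of "B \<inter> C" "B - C" Q "M t"] show ?thesis
    using set_integrable_M[of "B \<inter> C"] set_integrable_M[of "B - C"] assms by simp
qed

lemma set_integral_M_ge:
  assumes "B \<in> sets Q" and "\<And>\<omega>. \<omega> \<in> B \<Longrightarrow> K \<le> M t \<omega>"
  shows "K * measure Q B \<le> (\<integral>\<omega>\<in>B. M t \<omega> \<partial>Q)"
proof -
  have "K * measure Q B = (\<integral>\<omega>\<in>B. K \<partial>Q)"
    using assms(1) by (simp add: set_integral_const emeasure_eq_measure)
  also have "\<dots> \<le> (\<integral>\<omega>\<in>B. M t \<omega> \<partial>Q)"
  proof (rule set_integral_mono)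
    show "set_integrable Q B (\<lambda>_. K)"
      unfolding set_integrable_def using assms(1) by (rule integrable_mult_indicator) simp
    show "set_integrable Q B (M t)" using assms(1) by (rule set_integrable_M)
  qed (rule assms(2))
  finally show ?thesis .
qed

definition reach :: "real \<Rightarrow> nat \<Rightarrow> nat \<Rightarrow> 'a set" where
  "reach K t n = {\<omega> \<in> space Q. \<exists>s\<in>{t..<t+n}. K \<le> M s \<omega>}"

lemma reach_in_F: "reach K t n \<in> sets (F (t + n))"
proof -
  have [measurable]: "M s \<in> borel_measurable (F (t + n))" if "s \<in> {t..<t+n}" for s
    using measurable_M_F that by simp
  have "reach K t n = {\<omega> \<in> space (F (t + n)). \<exists>s\<in>{t..<t+n}. K \<le> M s \<omega>}"
    unfolding reach_def space_F ..
  also have "\<dots> \<in> sets (F (t + n))" by measurable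
  finally show ?thesis .
qed

lemma reach_Suc: "reach K t (Suc n) = reach K t n \<union> {\<omega> \<in> space Q. K \<le> M (t + n) \<omega>}"
  unfolding reach_def by (auto simp: less_Suc_eq)

text \<open>Doob's maximal inequality over the finite horizon \<open>[t, t + n)\<close>; the martingale mass
  not yet stopped at level \<open>K\<close> is carried along in the second summand.\<close>

lemma maximal_inequality_finite:
  assumes A: "A \<in> sets (F t)"
  shows "K * measure Q (A \<inter> reach K t n) + (\<integral>\<omega>\<in>A - reach K t n. M (t + n) \<omega> \<partial>Q)
    \<le> (\<integral>\<omega>\<in>A. M t \<omega> \<partial>Q)"
proof (induction n)
  case 0
  show ?case by (simp add: reach_def)
next
  case (Suc n)
  define R where "R = reach K t n"
  define C where "C = {\<omega> \<in> space Q. K \<le> M (t + n) \<omega>}"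
  have "A \<in> sets (F (t + n))" using A sets_F_mono[of t "t + n"] by auto
  moreover have "R \<in> sets (F (t + n))" unfolding R_def by (rule reach_in_F)
  moreover have "C \<in> sets (F (t + n))"
    using measurable_M_F[of "t + n" "t + n"] unfolding C_def space_F[of "t + n", symmetric]
    by measurable
  ultimately have F_sets: "A - R - C \<in> sets (F (t + n))"
    and [measurable]: "A \<in> sets Q" "R \<in> sets Q" "C \<in> sets Q"
    by (auto intro: sets_F_into_Q)
  have "A \<inter> reach K t (Suc n) = (A \<inter> R) \<union> ((A - R) \<inter> C)" and "A - reach K t (Suc n) = A - R - C"
    unfolding reach_Suc R_def C_def by blast+
  have "measure Q (A \<inter> reach K t (Suc n)) = measure Q (A \<inter> R) + measure Q ((A - R) \<inter> C)"
    unfolding \<open>A \<inter> reach K t (Suc n) = _\<close> by (rule finite_measure_Union) auto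
  then have "K * measure Q (A \<inter> reach K t (Suc n))
      = K * measure Q (A \<inter> R) + K * measure Q ((A - R) \<inter> C)"
    by (simp add: distrib_left)
  moreover have "(\<integral>\<omega>\<in>A - reach K t (Suc n). M (t + Suc n) \<omega> \<partial>Q)
      = (\<integral>\<omega>\<in>A - R - C. M (t + n) \<omega> \<partial>Q)"
    unfolding \<open>A - reach K t (Suc n) = _\<close> using F_sets by (rule set_integral_M_eq) simp
  moreover have "(\<integral>\<omega>\<in>A - R. M (t + n) \<omega> \<partial>Q)
      = (\<integral>\<omega>\<in>(A - R) \<inter> C. M (t + n) \<omega> \<partial>Q) + (\<integral>\<omega>\<in>A - R - C. M (t + n) \<omega> \<partial>Q)"
    by (rule set_integral_M_split) auto
  moreover have "K * measure Q ((A - R) \<inter> C) \<le> (\<integral>\<omega>\<in>(A - R) \<inter> C. M (t + n) \<omega> \<partial>Q)"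
    by (rule set_integral_M_ge) (auto simp: C_def)
  ultimately show ?case using Suc.IH unfolding R_def by linarith
qed

lemma maximal_inequality:
  assumes A: "A \<in> sets (F t)"
  shows "K * measure Q (A \<inter> {\<omega> \<in> space Q. \<exists>s\<ge>t. K \<le> M s \<omega>}) \<le> (\<integral>\<omega>\<in>A. M t \<omega> \<partial>Q)"
proof -
  have "A \<inter> reach K t n \<in> sets Q" for n
    by (intro sets.Int sets_F_into_Q[OF A] sets_F_into_Q[OF reach_in_F])
  moreover have "incseq (\<lambda>n. A \<inter> reach K t n)"
    by (rule incseq_SucI) (unfold reach_Suc, blast)
  ultimately have "(\<lambda>n. measure Q (A \<inter> reach K t n)) \<longlonglongrightarrow> measure Q (\<Union>n. A \<inter> reach K t n)"
    by (intro finite_Lim_measure_incseq) auto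
  also have "(\<Union>n. A \<inter> reach K t n) = A \<inter> {\<omega> \<in> space Q. \<exists>s\<ge>t. K \<le> M s \<omega>}"
  proof
    show "(\<Union>n. A \<inter> reach K t n) \<subseteq> A \<inter> {\<omega> \<in> space Q. \<exists>s\<ge>t. K \<le> M s \<omega>}"
      unfolding reach_def by (auto simp: atLeastLessThan_iff)
    show "A \<inter> {\<omega> \<in> space Q. \<exists>s\<ge>t. K \<le> M s \<omega>} \<subseteq> (\<Union>n. A \<inter> reach K t n)"
    proof
      fix \<omega> assume "\<omega> \<in> A \<inter> {\<omega> \<in> space Q. \<exists>s\<ge>t. K \<le> M s \<omega>}"
      then obtain s where "\<omega> \<in> A" "\<omega> \<in> space Q" "t \<le> s" "K \<le> M s \<omega>" by blast
      moreover have "s \<in> {t..<t + Suc s}" using \<open>t \<le> s\<close> by simp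
      ultimately have "\<omega> \<in> A \<inter> reach K t (Suc s)" unfolding reach_def by blast
      then show "\<omega> \<in> (\<Union>n. A \<inter> reach K t n)" by blast
    qed
  qed
  finally have "(\<lambda>n. K * measure Q (A \<inter> reach K t n))
      \<longlonglongrightarrow> K * measure Q (A \<inter> {\<omega> \<in> space Q. \<exists>s\<ge>t. K \<le> M s \<omega>})"
    by (rule tendsto_mult_left)
  moreover have "K * measure Q (A \<inter> reach K t n) \<le> (\<integral>\<omega>\<in>A. M t \<omega> \<partial>Q)" for n
    using maximal_inequality_finite[OF A, of K n] set_integral_M_nonneg[of "A - reach K t n" "t + n"]
    by linarith
  ultimately show ?thesis by (intro LIMSEQ_le_const2) auto
qed

lemma maximal_inequality_strict:
  assumes A: "A \<in> sets (F t)" and pos: "0 < measure Q A" and below: "\<And>\<omega>. \<omega> \<in> A \<Longrightarrow> M t \<omega> < K"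
  obtains K' where "0 < K'" "K' < K"
    "measure Q (A \<inter> {\<omega> \<in> space Q. \<exists>s\<ge>t. K' \<le> M s \<omega>}) < measure Q A"
proof -
  have [measurable]: "A \<in> sets Q" using A by (rule sets_F_into_Q)
  define I where "I = (\<integral>\<omega>\<in>A. M t \<omega> \<partial>Q)"
  have "I < (\<integral>\<omega>\<in>A. K \<partial>Q)"
    unfolding I_def set_lebesgue_integral_def
  proof (rule integral_less_AE[where A = A])
    show "integrable Q (\<lambda>\<omega>. indicator A \<omega> *\<^sub>R M t \<omega>)"
      using set_integrable_M[of A t] unfolding set_integrable_def by simp
    show "integrable Q (\<lambda>\<omega>. indicator A \<omega> *\<^sub>R K)"
      by (rule integrable_mult_indicator) auto
    show "emeasure Q A \<noteq> 0" using pos by (simp add: emeasure_eq_measure)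
    show "AE \<omega> in Q. \<omega> \<in> A \<longrightarrow> indicator A \<omega> *\<^sub>R M t \<omega> \<noteq> indicator A \<omega> *\<^sub>R K"
      by (intro AE_I2) (auto dest: below)
    show "AE \<omega> in Q. indicator A \<omega> *\<^sub>R M t \<omega> \<le> indicator A \<omega> *\<^sub>R K"
      by (intro AE_I2) (auto dest: below split: split_indicator)
  qed simp
  then have "I / measure Q A < K"
    using pos by (simp add: set_integral_const emeasure_eq_measure pos_divide_less_eq mult.commute)
  then obtain K' where K': "I / measure Q A < K'" "K' < K"
    using dense by blast
  have "0 \<le> I / measure Q A"
    unfolding I_def using set_integral_M_nonneg pos by simp
  from this K'(1) have "0 < K'" by (rule le_less_trans)
  have "K' * measure Q (A \<inter> {\<omega> \<in> space Q. \<exists>s\<ge>t. K' \<le> M s \<omega>}) \<le> I"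
    unfolding I_def using A by (rule maximal_inequality)
  also have "I < K' * measure Q A"
    using K'(1) pos by (simp add: pos_divide_less_eq mult.commute)
  finally have "measure Q (A \<inter> {\<omega> \<in> space Q. \<exists>s\<ge>t. K' \<le> M s \<omega>}) < measure Q A"
    using \<open>0 < K'\<close> by (simp add: mult_less_cancel_left_pos)
  with \<open>0 < K'\<close> K'(2) show ?thesis by (rule that)
qed

end

section \<open>The p-value\<close>

locale martingale_pvalue = nonneg_martingale +
  assumes no_atom_inf: "\<And>y. measure Q {\<omega> \<in> space Q. (INF t. 1 / ennreal (M t \<omega>)) = y} = 0"
begin

definition Y :: "'a \<Rightarrow> ennreal" where
  "Y \<omega> = (INF t. 1 / ennreal (M t \<omega>))"

definition Y_upto :: "nat \<Rightarrow> 'a \<Rightarrow> ennreal" where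
  "Y_upto t \<omega> = (INF s\<in>{..t}. 1 / ennreal (M s \<omega>))"

sublocale atomless_ennreal Q Y
proof
  show "Y \<in> borel_measurable Q" unfolding Y_def by measurable
  show "measure Q {\<omega> \<in> space Q. Y \<omega> = y} = 0" for y
    unfolding Y_def by (rule no_atom_inf)
qed

definition pval :: "nat \<Rightarrow> 'a \<Rightarrow> real" where
  "pval t \<omega> = distribution_fn (Y_upto t \<omega>)"

lemma measurable_pval: "pval t \<in> borel_measurable (F t)"
proof -
  have [measurable]: "M s \<in> borel_measurable (F t)" if "s \<in> {..t}" for s
    using measurable_M_F that by simp
  show ?thesis unfolding pval_def Y_upto_def by measurable
qed

lemma pval_nonneg: "0 \<le> pval t \<omega>" and pval_le_1: "pval t \<omega> \<le> 1"
  unfolding pval_def by (rule distribution_fn_nonneg distribution_fn_le_1)+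

lemma Y_le_Y_upto: "Y \<omega> \<le> Y_upto t \<omega>"
  unfolding Y_def Y_upto_def by (rule INF_superset_mono) auto

lemma INF_Y_upto: "(INF t. Y_upto t \<omega>) = Y \<omega>"
proof (rule antisym)
  show "(INF t. Y_upto t \<omega>) \<le> Y \<omega>"
    unfolding Y_def Y_upto_def by (rule INF_mono) (metis INF_lower atMost_iff order_refl)
qed (rule INF_greatest, rule Y_le_Y_upto)

lemma pval_tendsto: "(\<lambda>t. pval t \<omega>) \<longlonglongrightarrow> distribution_fn (Y \<omega>)"
proof -
  have "decseq (\<lambda>t. Y_upto t \<omega>)"
    unfolding decseq_def Y_upto_def by (auto intro: INF_superset_mono)
  from distribution_fn_decseq_tendsto[OF this] show ?thesis
    unfolding pval_def INF_Y_upto .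
qed

lemma liminf_pval: "liminf (\<lambda>t. ereal (pval t \<omega>)) = ereal (distribution_fn (Y \<omega>))"
  using pval_tendsto[of \<omega>] by (intro lim_imp_Liminf) (simp_all add: lim_ereal)

lemma liminf_le_if_dominated:
  assumes "\<And>t. 0 \<le> p t \<omega>" and "\<And>t. p t \<omega> \<le> pval t \<omega>"
  shows "real_of_ereal (liminf (\<lambda>t. ereal (p t \<omega>))) \<le> distribution_fn (Y \<omega>)"
proof -
  have "0 \<le> liminf (\<lambda>t. ereal (p t \<omega>))"
    using assms(1) by (intro Liminf_bounded) simp
  moreover have "liminf (\<lambda>t. ereal (p t \<omega>)) \<le> liminf (\<lambda>t. ereal (pval t \<omega>))"
    using assms(2) by (intro Liminf_mono) simp
  ultimately show ?thesis
    unfolding liminf_pval by (cases "liminf (\<lambda>t. ereal (p t \<omega>))") auto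
qed

lemma distribution_fn_Y_le_stopped: "distribution_fn (Y \<omega>) \<le> stopped pval \<tau> \<omega>"
proof (cases "\<tau> \<omega>")
  case (enat t)
  have "distribution_fn (Y \<omega>) \<le> pval t \<omega>"
    unfolding pval_def using distribution_fn_mono Y_le_Y_upto by (rule monoD)
  with enat show ?thesis unfolding stopped_def by simp
next
  case infinity
  then show ?thesis unfolding stopped_def liminf_pval by simp
qed

lemma anytime_valid_pval: "anytime_valid Q F pval"
  unfolding anytime_valid_def
proof (intro conjI allI impI ballI)
  show "pval t \<in> borel_measurable (F t)" for t by (rule measurable_pval)
  show "0 \<le> pval t \<omega>" "pval t \<omega> \<le> 1" for t \<omega> by (rule pval_nonneg pval_le_1)+
next
  fix \<tau> and \<alpha> :: real assume "0 \<le> \<alpha>" "\<alpha> \<le> 1"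
  have "measure Q {\<omega> \<in> space Q. stopped pval \<tau> \<omega> \<le> \<alpha>}
      \<le> measure Q {\<omega> \<in> space Q. distribution_fn (Y \<omega>) \<le> \<alpha>}"
  proof (rule finite_measure_mono)
    show "{\<omega> \<in> space Q. stopped pval \<tau> \<omega> \<le> \<alpha>} \<subseteq> {\<omega> \<in> space Q. distribution_fn (Y \<omega>) \<le> \<alpha>}"
      using distribution_fn_Y_le_stopped order_trans by blast
  qed measurable
  also have "\<dots> = \<alpha>"
    using \<open>0 \<le> \<alpha>\<close> \<open>\<alpha> \<le> 1\<close> by (rule prob_distribution_fn_le)
  finally show "measure Q {\<omega> \<in> space Q. stopped pval \<tau> \<omega> \<le> \<alpha>} \<le> \<alpha>" .
qed

lemma stopped_on_event_le:
  assumes "\<And>s. 0 \<le> p s \<omega>" and "\<And>s. p s \<omega> \<le> pval s \<omega>"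
    and "\<omega> \<in> A \<Longrightarrow> p t \<omega> \<le> \<alpha>" and "\<omega> \<notin> A \<Longrightarrow> distribution_fn (Y \<omega>) \<le> \<alpha>"
  shows "stopped p (\<lambda>\<omega>. if \<omega> \<in> A then enat t else \<infinity>) \<omega> \<le> \<alpha>"
proof (cases "\<omega> \<in> A")
  case False
  have "real_of_ereal (liminf (\<lambda>s. ereal (p s \<omega>))) \<le> distribution_fn (Y \<omega>)"
    using assms(1,2) by (rule liminf_le_if_dominated)
  with False assms(4) show ?thesis unfolding stopped_def by simp
qed (use assms(3) in \<open>simp add: stopped_def\<close>)

text \<open>Stop a dominating p-value at \<open>t\<close> on \<open>A\<close> and never elsewhere: its validity at level
  \<open>\<alpha>\<close> forces \<open>A\<close> to lie almost entirely inside \<open>{distribution_fn \<circ> Y \<le> \<alpha>}\<close>,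
  which already has probability \<open>\<alpha>\<close>.\<close>

lemma measure_le_if_dominated:
  assumes valid: "anytime_valid Q F p" and dom: "AE \<omega> in Q. \<forall>t. p t \<omega> \<le> pval t \<omega>"
    and A: "A \<in> sets (F t)" and p_le: "\<And>\<omega>. \<omega> \<in> A \<Longrightarrow> p t \<omega> \<le> \<alpha>"
    and \<alpha>: "0 \<le> \<alpha>" "\<alpha> \<le> 1"
  shows "measure Q A \<le> measure Q (A \<inter> {\<omega> \<in> space Q. distribution_fn (Y \<omega>) \<le> \<alpha>})"
proof -
  define B where "B = {\<omega> \<in> space Q. distribution_fn (Y \<omega>) \<le> \<alpha>}"
  define \<tau> where "\<tau> = (\<lambda>\<omega>. if \<omega> \<in> A then enat t else \<infinity>)"
  define S where "S = {\<omega> \<in> space Q. stopped p \<tau> \<omega> \<le> \<alpha>}"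
  have A_Q [measurable]: "A \<in> sets Q" using A by (rule sets_F_into_Q)
  have [measurable]: "B \<in> sets Q" unfolding B_def by measurable
  have [measurable]: "p s \<in> borel_measurable Q" for s
    using valid measurable_F_Q unfolding anytime_valid_def by blast
  have "stopping_time_inf F (space Q) \<tau>"
    unfolding \<tau>_def using A sets.sets_into_space[OF A_Q] by (rule stopping_time_inf_on_event)
  then have "measure Q S \<le> \<alpha>"
    unfolding S_def using valid \<alpha> unfolding anytime_valid_def by blast
  moreover have "measure Q (A \<union> (B - A)) \<le> measure Q S"
  proof (rule finite_measure_mono_AE)
    have "stopped p \<tau> \<omega> = (if \<omega> \<in> A then p t \<omega> else real_of_ereal (liminf (\<lambda>s. ereal (p s \<omega>))))"
      for \<omega> unfolding stopped_def \<tau>_def by simp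
    then show "S \<in> sets Q" unfolding S_def by simp
    show "AE \<omega> in Q. \<omega> \<in> A \<union> (B - A) \<longrightarrow> \<omega> \<in> S"
      using dom
    proof (rule eventually_mono, intro impI)
      fix \<omega> assume "\<forall>t. p t \<omega> \<le> pval t \<omega>" and "\<omega> \<in> A \<union> (B - A)"
      moreover from this have "\<omega> \<in> space Q" using sets.sets_into_space[OF A_Q] B_def by blast
      moreover from this have "0 \<le> p s \<omega>" for s
        using valid unfolding anytime_valid_def by blast
      ultimately show "\<omega> \<in> S"
        unfolding S_def \<tau>_def using p_le by (auto simp: B_def intro!: stopped_on_event_le)
    qed
  qed
  moreover have "measure Q (A \<union> (B - A)) = measure Q A + measure Q (B - A)"
    by (rule finite_measure_Union) auto
  moreover have "measure Q (B - A) = measure Q B - measure Q (B \<inter> A)"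
    by (rule finite_measure_Diff') auto
  moreover have "measure Q B = \<alpha>"
    unfolding B_def using \<alpha> by (rule prob_distribution_fn_le)
  ultimately show ?thesis unfolding B_def[symmetric] by (simp add: Int_commute)
qed

lemma reaches_if_Y_le:
  assumes "ennreal r < Y_upto t \<omega>" and "Y \<omega> \<le> ennreal r" and "0 < K" and "r < 1 / K"
  shows "\<exists>s\<ge>t. K \<le> M s \<omega>"
proof (rule ccontr)
  assume "\<not> (\<exists>s\<ge>t. K \<le> M s \<omega>)"
  then have below: "M s \<omega> < K" if "t \<le> s" for s using that by auto
  have "min (Y_upto t \<omega>) (ennreal (1 / K)) \<le> 1 / ennreal (M s \<omega>)" for s
  proof (cases "s \<le> t")
    case True
    then have "Y_upto t \<omega> \<le> 1 / ennreal (M s \<omega>)"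
      unfolding Y_upto_def by (intro INF_lower) simp
    then show ?thesis by (rule min.coboundedI1)
  next
    case False
    then have "ennreal (1 / K) < 1 / ennreal (M s \<omega>)"
      using \<open>0 < K\<close> below[of s] ennreal_less_reciprocal_iff[of "1 / K" "M s \<omega>"] by simp
    then show ?thesis by (intro min.coboundedI2 less_imp_le)
  qed
  then have "min (Y_upto t \<omega>) (ennreal (1 / K)) \<le> Y \<omega>"
    unfolding Y_def by (rule INF_greatest)
  moreover have "ennreal r < min (Y_upto t \<omega>) (ennreal (1 / K))"
    using assms(1,3,4) by (simp add: ennreal_lessI)
  ultimately show False using assms(2) by (meson leD less_le_trans)
qed

text \<open>On an \<open>F t\<close>-event where \<open>Y_upto t\<close> stays above \<open>c\<close> the martingale is below \<open>1 / c\<close>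
  at time \<open>t\<close>, so by the strict maximal inequality it fails with positive probability to climb
  high enough afterwards to push \<open>Y\<close> down to \<open>c\<close>.\<close>

lemma measure_Y_le_lt:
  assumes A: "A \<in> sets (F t)" and pos: "0 < measure Q A"
    and c_less: "\<And>\<omega>. \<omega> \<in> A \<Longrightarrow> c < Y_upto t \<omega>"
  shows "measure Q (A \<inter> {\<omega> \<in> space Q. Y \<omega> \<le> c}) < measure Q A"
proof (cases "c = 0")
  case True
  have "measure Q (A \<inter> {\<omega> \<in> space Q. Y \<omega> \<le> c}) \<le> distribution_fn c"
    unfolding distribution_fn_def by (rule finite_measure_mono) auto
  with True pos distribution_fn_0 show ?thesis by simp
next
  case False
  have [measurable]: "A \<in> sets Q" using A by (rule sets_F_into_Q)
  have "A \<noteq> {}" using pos by auto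
  then obtain \<omega>\<^sub>0 where "\<omega>\<^sub>0 \<in> A" by blast
  have "c < top" using c_less[OF \<open>\<omega>\<^sub>0 \<in> A\<close>] by (rule less_le_trans) simp
  with False obtain r where c: "c = ennreal r" and "0 < r"
    by (cases c rule: ennreal_cases) auto
  have "M t \<omega> < 1 / r" if "\<omega> \<in> A" for \<omega>
  proof -
    have "Y_upto t \<omega> \<le> 1 / ennreal (M t \<omega>)" unfolding Y_upto_def by (intro INF_lower) simp
    with c_less[OF that] have "ennreal r < 1 / ennreal (M t \<omega>)" unfolding c by simp
    with \<open>0 < r\<close> show ?thesis by (simp add: ennreal_less_reciprocal_iff)
  qed
  then obtain K where "0 < K" "K < 1 / r"
    and K: "measure Q (A \<inter> {\<omega> \<in> space Q. \<exists>s\<ge>t. K \<le> M s \<omega>}) < measure Q A"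
    using maximal_inequality_strict[OF A pos] by blast
  have "r < 1 / K" using \<open>0 < K\<close> \<open>0 < r\<close> \<open>K < 1 / r\<close> by (simp add: field_simps)
  have "A \<inter> {\<omega> \<in> space Q. Y \<omega> \<le> c} \<subseteq> A \<inter> {\<omega> \<in> space Q. \<exists>s\<ge>t. K \<le> M s \<omega>}"
    using c_less reaches_if_Y_le[OF _ _ \<open>0 < K\<close> \<open>r < 1 / K\<close>] unfolding c by blast
  then have "measure Q (A \<inter> {\<omega> \<in> space Q. Y \<omega> \<le> c})
      \<le> measure Q (A \<inter> {\<omega> \<in> space Q. \<exists>s\<ge>t. K \<le> M s \<omega>})"
    by (rule finite_measure_mono) measurable
  with K show ?thesis by simp
qed

lemma measure_lt_if_above:
  assumes A: "A \<in> sets (F t)" and pos: "0 < measure Q A"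
    and above: "\<And>\<omega>. \<omega> \<in> A \<Longrightarrow> \<alpha> < pval t \<omega>" and \<alpha>: "0 \<le> \<alpha>"
  shows "measure Q (A \<inter> {\<omega> \<in> space Q. distribution_fn (Y \<omega>) \<le> \<alpha>}) < measure Q A"
proof -
  have "{\<omega> \<in> space Q. distribution_fn (Y \<omega>) \<le> \<alpha>} = {\<omega> \<in> space Q. Y \<omega> \<le> quantile \<alpha>}"
    using distribution_fn_le_iff[OF \<alpha>] by blast
  moreover have "quantile \<alpha> < Y_upto t \<omega>" if "\<omega> \<in> A" for \<omega>
    using above[OF that] distribution_fn_le_iff[OF \<alpha>] unfolding pval_def by (meson not_le)
  ultimately show ?thesis using measure_Y_le_lt[OF A pos] by simp
qed

lemma admissible_pval: "admissible Q F pval"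
  unfolding admissible_def
proof (intro conjI notI anytime_valid_pval)
  assume "\<exists>p. anytime_valid Q F p \<and> (\<forall>t. measure Q {\<omega> \<in> space Q. p t \<omega> \<le> pval t \<omega>} = 1) \<and>
    (\<exists>t. 0 < measure Q {\<omega> \<in> space Q. p t \<omega> < pval t \<omega>})"
  then obtain p t where valid: "anytime_valid Q F p"
    and dom_prob: "\<And>s. measure Q {\<omega> \<in> space Q. p s \<omega> \<le> pval s \<omega>} = 1"
    and pos: "0 < measure Q {\<omega> \<in> space Q. p t \<omega> < pval t \<omega>}" by blast
  have p_F [measurable]: "p s \<in> borel_measurable (F s)" for s
    using valid unfolding anytime_valid_def by blast
  have [measurable]: "p s \<in> borel_measurable Q" "pval s \<in> borel_measurable Q" for s
    using measurable_F_Q p_F measurable_pval by blast+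
  have dom: "AE \<omega> in Q. \<forall>s. p s \<omega> \<le> pval s \<omega>"
    unfolding AE_all_countable
  proof
    fix s
    have "AE \<omega> in Q. \<omega> \<in> {\<omega> \<in> space Q. p s \<omega> \<le> pval s \<omega>}"
      using dom_prob by (intro AE_prob_1) simp_all
    then show "AE \<omega> in Q. p s \<omega> \<le> pval s \<omega>" by (rule eventually_mono) simp
  qed
  obtain \<alpha> where "0 < measure Q {\<omega> \<in> space Q. p t \<omega> \<le> \<alpha> \<and> \<alpha> < pval t \<omega>}"
    using measure_less_pos_imp_ex_threshold[OF _ _ pos] by auto
  moreover define A where "A = {\<omega> \<in> space Q. p t \<omega> \<le> \<alpha> \<and> \<alpha> < pval t \<omega>}"
  ultimately have A_pos: "0 < measure Q A" by simp
  have A_F: "A \<in> sets (F t)"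
    using measurable_pval[of t] unfolding A_def space_F[of t, symmetric] by measurable
  have "A \<noteq> {}" using A_pos by auto
  then obtain \<omega> where "\<omega> \<in> A" by blast
  then have "\<omega> \<in> space Q" "p t \<omega> \<le> \<alpha>" "\<alpha> < pval t \<omega>" unfolding A_def by auto
  moreover have "0 \<le> p t \<omega>"
    using valid \<open>\<omega> \<in> space Q\<close> unfolding anytime_valid_def by blast
  ultimately have \<alpha>: "0 \<le> \<alpha>" "\<alpha> \<le> 1" using pval_le_1[of t \<omega>] by linarith+
  have "measure Q A \<le> measure Q (A \<inter> {\<omega> \<in> space Q. distribution_fn (Y \<omega>) \<le> \<alpha>})"
    using valid dom A_F _ \<alpha> by (rule measure_le_if_dominated) (simp add: A_def)
  also have "\<dots> < measure Q A"
    using A_F A_pos _ \<alpha>(1) by (rule measure_lt_if_above) (simp add: A_def)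
  finally show False by simp
qed

end

theorem corollary1:
  fixes Q :: "'a measure" and U :: "'a \<Rightarrow> real" and X :: "nat \<Rightarrow> 'a \<Rightarrow> 'b"
    and S :: "'b measure" and M :: "nat \<Rightarrow> 'a \<Rightarrow> real"
  assumes "prob_space Q"
    and "U \<in> borel_measurable Q"
    and "distr Q borel U = uniform_measure lborel {0..1}"
    and "\<And>i. X i \<in> measurable Q S"
    and "prob_space.indep_set Q {U -` B \<inter> space Q | B. B \<in> sets borel} (sets (obs_sigma Q X S))"
    and "martingale Q (filt Q U X S) M"
    and "\<And>t. AE \<omega> in Q. M t \<omega> \<ge> 0"
    and "AE \<omega> in Q. M 0 \<omega> > 0"
    and "\<And>x::ennreal. measure Q {\<omega> \<in> space Q. (INF t. 1 / ennreal (M t \<omega>)) = x} = 0"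
  shows "admissible Q (filt Q U X S)
           (\<lambda>t \<omega>. measure Q {\<omega>' \<in> space Q.
                    (INF s. 1 / ennreal (M s \<omega>')) \<le> (INF s\<in>{..t}. 1 / ennreal (M s \<omega>))})"
proof -
  interpret martingale_pvalue Q "filt Q U X S" M
  proof (intro martingale_pvalue.intro nonneg_martingale.intro)
    show "prob_space Q" by fact
    show "nonneg_martingale_axioms Q (filt Q U X S) M"
    proof
      show "space (filt Q U X S t) = space Q" for t by (rule space_filt)
      show "sets (filt Q U X S t) \<subseteq> sets Q" for t using assms(2,4) by (rule sets_filt_subset)
      show "sets (filt Q U X S s) \<subseteq> sets (filt Q U X S t)" if "s \<le> t" for s t
        using that by (rule sets_filt_mono)
    qed fact+
    show "martingale_pvalue_axioms Q M" by standard fact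
  qed
  have "pval = (\<lambda>t \<omega>. measure Q {\<omega>' \<in> space Q.
                    (INF s. 1 / ennreal (M s \<omega>')) \<le> (INF s\<in>{..t}. 1 / ennreal (M s \<omega>))})"
    by (intro ext) (simp add: pval_def distribution_fn_def Y_def Y_upto_def)
  with admissible_pval show ?thesis by simp
qed

end
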